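(* Let $T$ be a tree on at least three vertices and let $S \subseteq V(T)$. Then $S$ is a minimal fort of $T$ if and only if both of the following hold: (I) $S$ contains at least one leaf of $T$; and (II) for every leaf $\ell \in S$, every edge $\{a,b\}$ of $T$ with $a$ closer to $\ell$ than $b$ (possibly $a=\ell$, and possibly $b$ is a leaf) satisfies: (i) if $a, b \notin S$, then $N(b) \cap S = \emptyset$; (ii) if $a \notin S$ and $b \in S$, then $|N(b) \cap S| \le 1$; (iii) if $a \in S$ and $b \notin S$, then $|(N(b)\cap S)\setminus\{a\}| = 1$; (iv) if $a, b \in S$, then $|(N(b)\cap S)\setminus\{a\}| = 0$.
   Context: $N(b)$ is the set of neighbors of $b$. Distances are graph distances in $T$. A fort of a graph $G$ is a nonempty set $F\subseteq V(G)$ such that every vertex outside $F$ is adjacent to either zero or at least two vertices of $F$; it is minimal if no proper subset is a fort. *)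

theory Defs
  imports Main
begin

definition nbrs :: "('a \<Rightarrow> 'a \<Rightarrow> bool) \<Rightarrow> 'a \<Rightarrow> 'a set" where
  "nbrs E v = {u. E v u}"

definition is_walk :: "'a set \<Rightarrow> ('a \<Rightarrow> 'a \<Rightarrow> bool) \<Rightarrow> 'a list \<Rightarrow> bool" where
  "is_walk V E xs \<longleftrightarrow> xs \<noteq> [] \<and> set xs \<subseteq> V \<and> (\<forall>i. Suc i < length xs \<longrightarrow> E (xs ! i) (xs ! Suc i))"

definition graph_connected :: "'a set \<Rightarrow> ('a \<Rightarrow> 'a \<Rightarrow> bool) \<Rightarrow> bool" where
  "graph_connected V E \<longleftrightarrow>
     (\<forall>u\<in>V. \<forall>v\<in>V. \<exists>xs. is_walk V E xs \<and> hd xs = u \<and> last xs = v)"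

definition gdist :: "'a set \<Rightarrow> ('a \<Rightarrow> 'a \<Rightarrow> bool) \<Rightarrow> 'a \<Rightarrow> 'a \<Rightarrow> nat" where
  "gdist V E u v = (LEAST n. \<exists>xs. is_walk V E xs \<and> hd xs = u \<and> last xs = v \<and> length xs = Suc n)"

definition edge_set :: "('a \<Rightarrow> 'a \<Rightarrow> bool) \<Rightarrow> 'a set set" where
  "edge_set E = {{u, v} | u v. E u v}"

definition is_tree :: "'a set \<Rightarrow> ('a \<Rightarrow> 'a \<Rightarrow> bool) \<Rightarrow> bool" where
  "is_tree V E \<longleftrightarrow> finite V \<and> V \<noteq> {}
     \<and> (\<forall>u v. E u v \<longrightarrow> u \<in> V \<and> v \<in> V)
     \<and> (\<forall>u v. E u v \<longrightarrow> E v u) \<and> (\<forall>u. \<not> E u u)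
     \<and> graph_connected V E \<and> card (edge_set E) = card V - 1"

definition is_leaf :: "('a \<Rightarrow> 'a \<Rightarrow> bool) \<Rightarrow> 'a \<Rightarrow> bool" where
  "is_leaf E v \<longleftrightarrow> card (nbrs E v) = 1"

definition is_fort :: "'a set \<Rightarrow> ('a \<Rightarrow> 'a \<Rightarrow> bool) \<Rightarrow> 'a set \<Rightarrow> bool" where
  "is_fort V E F \<longleftrightarrow> F \<noteq> {} \<and> F \<subseteq> V \<and>
     (\<forall>v \<in> V - F. card (nbrs E v \<inter> F) \<noteq> 1)"

definition is_minimal_fort :: "'a set \<Rightarrow> ('a \<Rightarrow> 'a \<Rightarrow> bool) \<Rightarrow> 'a set \<Rightarrow> bool" where
  "is_minimal_fort V E F \<longleftrightarrow> is_fort V E F \<and> (\<forall>F'. F' \<subset> F \<longrightarrow> \<not> is_fort V E F')"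

end

theory Submission
  imports Defs
begin

text \<open>Root T at a leaf l of S. Then conditions (i)-(iv) say that every vertex of S has at most
  one neighbour in S, and that every vertex outside S has as many children in S as it has
  parents in S, that is none or one. Such an S is a fort, since a vertex outside S sees none or
  two vertices of S. It is minimal: in a fort F inside S, membership in F passes from each
  vertex of S to its parent, or to its grandparent when the parent lies outside S, and so
  reaches l. Conversely, a violation yields a proper subfort of S: two children of b in S give
  the part of S below them, and b in S together with its parent and a child in S gives S
  without b and without the branches below b that start outside S. Finally, every fort
  contains a leaf, since a child of a deepest vertex s of S sees only s in S.\<close>

definition fort_edge_condition :: "('a \<Rightarrow> 'a \<Rightarrow> bool) \<Rightarrow> 'a set \<Rightarrow> 'a \<Rightarrow> 'a \<Rightarrow> bool" where
  "fort_edge_condition E S a b \<longleftrightarrow>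
     (a \<notin> S \<and> b \<notin> S \<longrightarrow> nbrs E b \<inter> S = {}) \<and>
     (a \<notin> S \<and> b \<in> S \<longrightarrow> card (nbrs E b \<inter> S) \<le> 1) \<and>
     (a \<in> S \<and> b \<notin> S \<longrightarrow> card ((nbrs E b \<inter> S) - {a}) = 1) \<and>
     (a \<in> S \<and> b \<in> S \<longrightarrow> card ((nbrs E b \<inter> S) - {a}) = 0)"

lemma fort_card_nbrs_outside:
  "is_fort V E S \<Longrightarrow> v \<in> V \<Longrightarrow> v \<notin> S \<Longrightarrow> card (nbrs E v \<inter> S) \<noteq> 1"
  unfolding is_fort_def by blast

lemma fort_mem_if_sole_nbr:
  assumes "is_fort V E F" "F \<subseteq> S" "x \<in> V" "finite (nbrs E x)"
    and "card (nbrs E x \<inter> S) \<le> 1" "y \<in> nbrs E x \<inter> F"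
  shows "x \<in> F"
proof (rule ccontr)
  assume "x \<notin> F"
  have "nbrs E x \<inter> F = {y}"
    using assms(2,4-6) card_le_Suc0_iff_eq[of "nbrs E x \<inter> S"] by auto
  then show False
    using fort_card_nbrs_outside[OF assms(1,3) \<open>x \<notin> F\<close>] by simp
qed

locale rooted_tree =
  fixes V :: "'a set" and E :: "'a \<Rightarrow> 'a \<Rightarrow> bool" and root :: 'a
    and parent :: "'a \<Rightarrow> 'a" and depth :: "'a \<Rightarrow> nat"
  assumes finite_V: "finite V"
    and edge_in_V: "E u v \<Longrightarrow> u \<in> V \<and> v \<in> V"
    and edge_sym: "E u v \<Longrightarrow> E v u"
    and parent_edge: "v \<in> V \<Longrightarrow> v \<noteq> root \<Longrightarrow> E v (parent v)"
    and depth_parent_less: "v \<in> V \<Longrightarrow> v \<noteq> root \<Longrightarrow> depth (parent v) < depth v"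
    and edge_parent_cases: "E u v \<Longrightarrow> (u \<noteq> root \<and> v = parent u) \<or> (v \<noteq> root \<and> u = parent v)"
begin

definition children :: "'a \<Rightarrow> 'a set" where
  "children b = {c \<in> V. c \<noteq> root \<and> parent c = b}"

lemma parent_in_V: "v \<in> V \<Longrightarrow> v \<noteq> root \<Longrightarrow> parent v \<in> V"
  using parent_edge edge_in_V by blast

lemma finite_nbrs: "finite (nbrs E v)"
proof (rule finite_subset[OF _ finite_V])
  show "nbrs E v \<subseteq> V" using edge_in_V unfolding nbrs_def by blast
qed

lemma finite_children: "finite (children b)"
  using finite_V unfolding children_def by simp

lemma depth_less_child: "c \<in> children b \<Longrightarrow> depth b < depth c"
  unfolding children_def using depth_parent_less by blast

lemma edge_depth_less_iff: "E a b \<and> depth a < depth b \<longleftrightarrow> b \<in> V \<and> b \<noteq> root \<and> a = parent b"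
proof
  assume ab: "E a b \<and> depth a < depth b"
  have "\<not> (a \<noteq> root \<and> b = parent a)"
    using ab edge_in_V depth_parent_less by fastforce
  then show "b \<in> V \<and> b \<noteq> root \<and> a = parent b"
    using ab edge_parent_cases edge_in_V by blast
qed (use parent_edge edge_sym depth_parent_less in blast)

lemma nbrs_eq_insert_parent:
  "b \<in> V \<Longrightarrow> b \<noteq> root \<Longrightarrow> nbrs E b = insert (parent b) (children b)"
  unfolding nbrs_def children_def using edge_parent_cases edge_in_V parent_edge edge_sym by blast

lemma children_subset_nbrs: "children b \<subseteq> nbrs E b"
  unfolding nbrs_def children_def using parent_edge edge_sym by blast

lemma nbr_in_children: "w \<in> nbrs E b \<Longrightarrow> b = root \<or> w \<noteq> parent b \<Longrightarrow> w \<in> children b"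
  unfolding nbrs_def children_def using edge_parent_cases edge_in_V by blast

lemma parent_notin_children: "b \<in> V \<Longrightarrow> b \<noteq> root \<Longrightarrow> parent b \<notin> children b"
  using depth_less_child depth_parent_less by fastforce

lemma card_nbrs_Int:
  assumes "b \<in> V" "b \<noteq> root"
  shows "card (nbrs E b \<inter> S) = card (children b \<inter> S) + of_bool (parent b \<in> S)"
  using assms nbrs_eq_insert_parent parent_notin_children finite_children by auto

lemma children_root_nonempty: "v \<in> V \<Longrightarrow> v \<noteq> root \<Longrightarrow> children root \<noteq> {}"
proof (induction "depth v" arbitrary: v rule: less_induct)
  case less
  then show ?case
    using parent_in_V depth_parent_less unfolding children_def by (cases "parent v = root") auto
qed

inductive descendant :: "'a \<Rightarrow> 'a \<Rightarrow> bool" for c where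
  descendant_refl: "descendant c c"
| descendant_child: "v \<in> V \<Longrightarrow> v \<noteq> root \<Longrightarrow> descendant c (parent v) \<Longrightarrow> descendant c v"

lemma descendant_depth: "descendant c v \<Longrightarrow> depth c \<le> depth v"
  by (induction rule: descendant.induct) (auto dest: depth_parent_less)

lemma descendant_cases: "descendant c v \<Longrightarrow> v = c \<or> v \<in> V \<and> v \<noteq> root \<and> descendant c (parent v)"
  by (induction rule: descendant.induct) auto

lemma descendant_edge:
  assumes "descendant c u" "E u w" "\<not> descendant c w"
  shows "u = c \<and> c \<noteq> root \<and> w = parent c"
  using edge_parent_cases[OF assms(2)]
proof
  assume "u \<noteq> root \<and> w = parent u"
  then show ?thesis using descendant_cases[OF assms(1)] assms(3) by blast
next
  assume "w \<noteq> root \<and> u = parent w"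
  then have "descendant c w"
    using assms(1,2) edge_in_V descendant_child by blast
  with assms(3) show ?thesis ..
qed

definition subtrees :: "'a set \<Rightarrow> 'a set" where
  "subtrees C = {v. \<exists>c\<in>C. descendant c v}"

lemma subset_subtrees: "C \<subseteq> subtrees C"
  unfolding subtrees_def using descendant_refl by blast

context
  fixes C b assumes C_children: "C \<subseteq> children b"
begin

lemma subtrees_boundary:
  assumes "w \<in> subtrees C" "E w v" "v \<notin> subtrees C"
  shows "w \<in> C \<and> v = b"
proof -
  obtain c where "c \<in> C" "descendant c w" using assms(1) unfolding subtrees_def by blast
  moreover have "\<not> descendant c v" using assms(3) \<open>c \<in> C\<close> unfolding subtrees_def by blast
  ultimately show ?thesis
    using descendant_edge[OF \<open>descendant c w\<close> assms(2)] C_children unfolding children_def by blast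
qed

lemma depth_less_subtrees:
  assumes "x \<in> subtrees C"
  shows "depth b < depth x"
proof -
  obtain c where "c \<in> C" "descendant c x" using assms unfolding subtrees_def by blast
  then have "depth b < depth c" using C_children depth_less_child by blast
  also have "depth c \<le> depth x" using descendant_depth[OF \<open>descendant c x\<close>] .
  finally show ?thesis .
qed

lemma notin_subtrees:
  "b \<notin> subtrees C"
  "b \<in> V \<Longrightarrow> b \<noteq> root \<Longrightarrow> parent b \<notin> subtrees C"
  "root \<notin> subtrees C"
proof -
  show "b \<notin> subtrees C" using depth_less_subtrees by blast
  show "b \<in> V \<Longrightarrow> b \<noteq> root \<Longrightarrow> parent b \<notin> subtrees C"
    using depth_less_subtrees depth_parent_less by fastforce
  show "root \<notin> subtrees C"
    using C_children descendant_cases unfolding subtrees_def children_def by blast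
qed

lemma children_in_subtrees_iff: "x \<in> children b \<Longrightarrow> x \<in> subtrees C \<longleftrightarrow> x \<in> C"
  using C_children descendant_cases notin_subtrees(1) subset_subtrees
  unfolding subtrees_def children_def by blast

end

lemma fort_contains_leaf:
  assumes fort: "is_fort V E S" and "v \<in> V" "v \<noteq> root"
  shows "\<exists>x\<in>S. is_leaf E x"
proof (rule ccontr)
  assume no_leaf: "\<not> (\<exists>x\<in>S. is_leaf E x)"
  have "finite S" "S \<noteq> {}" "S \<subseteq> V"
    using fort finite_V finite_subset unfolding is_fort_def by auto
  have "Max (depth ` S) \<in> depth ` S" using \<open>finite S\<close> \<open>S \<noteq> {}\<close> by simp
  then obtain s where "s \<in> S" "depth s = Max (depth ` S)" by (metis imageE)
  then have deepest: "depth x \<le> depth s" if "x \<in> S" for x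
    using \<open>finite S\<close> that by simp
  have "children s \<noteq> {}"
  proof (cases "s = root")
    case True
    then show ?thesis using children_root_nonempty assms(2,3) by blast
  next
    case False
    have "card (nbrs E s) \<noteq> 1" using no_leaf \<open>s \<in> S\<close> unfolding is_leaf_def by blast
    moreover have "nbrs E s = insert (parent s) (children s)"
      using nbrs_eq_insert_parent \<open>s \<in> S\<close> \<open>S \<subseteq> V\<close> False by blast
    ultimately show ?thesis by auto
  qed
  then obtain c where c: "c \<in> children s" by blast
  then have "c \<in> V" "c \<noteq> root" "parent c = s" unfolding children_def by auto
  have "depth s < depth c" using depth_less_child[OF c] .
  then have "c \<notin> S" using deepest[of c] by linarith
  have "x \<notin> S" if "x \<in> children c" for x
    using deepest[of x] depth_less_child[OF that] \<open>depth s < depth c\<close> by linarith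
  then have "children c \<inter> S = {}" by blast
  then have "card (nbrs E c \<inter> S) = 1"
    using card_nbrs_Int[OF \<open>c \<in> V\<close> \<open>c \<noteq> root\<close>] \<open>parent c = s\<close> \<open>s \<in> S\<close> by simp
  then show False using fort_card_nbrs_outside[OF fort \<open>c \<in> V\<close> \<open>c \<notin> S\<close>] by simp
qed

lemma fort_Int_subtrees:
  assumes fort: "is_fort V E S" and "b \<in> V"
    and C: "C \<subseteq> children b \<inter> S" and two: "2 \<le> card C"
  shows "is_fort V E (S \<inter> subtrees C)"
  unfolding is_fort_def
proof (intro conjI ballI)
  have C_children: "C \<subseteq> children b" using C by blast
  have "C \<noteq> {}" using two by auto
  then show "S \<inter> subtrees C \<noteq> {}" using C subset_subtrees by blast
  show "S \<inter> subtrees C \<subseteq> V" using fort unfolding is_fort_def by blast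
  fix v assume v: "v \<in> V - S \<inter> subtrees C"
  consider "v = b" | "v \<noteq> b" "v \<in> subtrees C" | "v \<noteq> b" "v \<notin> subtrees C" by blast
  then show "card (nbrs E v \<inter> (S \<inter> subtrees C)) \<noteq> 1"
  proof cases
    case 1
    have "nbrs E b \<inter> (S \<inter> subtrees C) = C"
    proof
      show "C \<subseteq> nbrs E b \<inter> (S \<inter> subtrees C)"
        using C children_subset_nbrs subset_subtrees by blast
      show "nbrs E b \<inter> (S \<inter> subtrees C) \<subseteq> C"
        using nbr_in_children children_in_subtrees_iff[OF C_children]
          notin_subtrees(2)[OF C_children \<open>b \<in> V\<close>] by blast
    qed
    then show ?thesis using 1 two by simp
  next
    case 2
    then have "v \<notin> S" using v by blast
    have "nbrs E v \<inter> (S \<inter> subtrees C) = nbrs E v \<inter> S"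
      using subtrees_boundary[OF C_children 2(2)] C \<open>v \<notin> S\<close> unfolding nbrs_def by blast
    then show ?thesis using fort_card_nbrs_outside[OF fort _ \<open>v \<notin> S\<close>] v by simp
  next
    case 3
    have "nbrs E v \<inter> (S \<inter> subtrees C) = {}"
      using subtrees_boundary[OF C_children] edge_sym 3 unfolding nbrs_def by blast
    then show ?thesis by simp
  qed
qed

lemma minimal_fort_card_children:
  assumes min: "is_minimal_fort V E S" and "root \<in> S" "b \<in> V"
  shows "card (children b \<inter> S) \<le> 1"
proof (rule ccontr)
  let ?C = "children b \<inter> S"
  assume "\<not> card ?C \<le> 1"
  then have "is_fort V E (S \<inter> subtrees ?C)"
    using fort_Int_subtrees min \<open>b \<in> V\<close> unfolding is_minimal_fort_def by simp
  moreover have "S \<inter> subtrees ?C \<subset> S"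
    using notin_subtrees(3)[of ?C b] \<open>root \<in> S\<close> by blast
  ultimately show False using min unfolding is_minimal_fort_def by blast
qed

text \<open>Vertex b keeps two neighbours in the smaller fort: its parent and a child in S.\<close>
lemma fort_Diff_branch:
  assumes fort: "is_fort V E S" and "b \<in> V" "b \<noteq> root" "parent b \<in> S"
    and "c \<in> children b \<inter> S"
  shows "is_fort V E (S - insert b (subtrees (children b - S)))"
    (is "is_fort V E (S - insert b ?U)")
  unfolding is_fort_def
proof (intro conjI ballI)
  have U_children: "children b - S \<subseteq> children b" by blast
  have parent_in: "parent b \<in> S - insert b ?U"
    using \<open>parent b \<in> S\<close> notin_subtrees(2)[OF U_children \<open>b \<in> V\<close> \<open>b \<noteq> root\<close>]
      depth_parent_less[OF \<open>b \<in> V\<close> \<open>b \<noteq> root\<close>] by auto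
  have child_in: "c \<in> S - insert b ?U"
    using assms(5) children_in_subtrees_iff[OF U_children] depth_less_child by fastforce
  show "S - insert b ?U \<noteq> {}" using parent_in by blast
  show "S - insert b ?U \<subseteq> V" using fort unfolding is_fort_def by blast
  fix v assume v: "v \<in> V - (S - insert b ?U)"
  consider "v = b" | "v \<noteq> b" "v \<in> ?U" | "v \<noteq> b" "v \<notin> ?U" by blast
  then show "card (nbrs E v \<inter> (S - insert b ?U)) \<noteq> 1"
  proof cases
    case 1
    have "parent b \<in> nbrs E b" "c \<in> nbrs E b"
      using parent_edge[OF \<open>b \<in> V\<close> \<open>b \<noteq> root\<close>] assms(5) children_subset_nbrs
      unfolding nbrs_def by blast+
    then have "{parent b, c} \<subseteq> nbrs E v \<inter> (S - insert b ?U)"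
      using 1 parent_in child_in by auto
    moreover have "parent b \<noteq> c"
      using assms(5) parent_notin_children[OF \<open>b \<in> V\<close> \<open>b \<noteq> root\<close>] by blast
    ultimately have "2 \<le> card (nbrs E v \<inter> (S - insert b ?U))"
      using card_mono[OF _ \<open>{parent b, c} \<subseteq> _\<close>] finite_nbrs by fastforce
    then show ?thesis by simp
  next
    case 2
    have "nbrs E v \<inter> (S - insert b ?U) = {}"
      using subtrees_boundary[OF U_children 2(2)] unfolding nbrs_def by blast
    then show ?thesis by simp
  next
    case 3
    then have "v \<notin> S" using v by blast
    have "v \<notin> children b"
      using 3 \<open>v \<notin> S\<close> subset_subtrees by blast
    have "b \<notin> nbrs E v"
    proof
      assume "b \<in> nbrs E v"
      then have "E v b" unfolding nbrs_def by simp
      then show False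
        using edge_parent_cases[OF \<open>E v b\<close>] edge_in_V \<open>v \<notin> children b\<close> \<open>v \<notin> S\<close>
          \<open>parent b \<in> S\<close> unfolding children_def by blast
    qed
    moreover have "w \<notin> ?U" if "w \<in> nbrs E v" for w
      using subtrees_boundary[OF U_children _ edge_sym] 3 that unfolding nbrs_def by blast
    ultimately have "nbrs E v \<inter> (S - insert b ?U) = nbrs E v \<inter> S" by blast
    then show ?thesis using fort_card_nbrs_outside[OF fort _ \<open>v \<notin> S\<close>] v by simp
  qed
qed

lemma minimal_fort_no_children:
  assumes min: "is_minimal_fort V E S" and "b \<in> V" "b \<noteq> root" "parent b \<in> S" "b \<in> S"
  shows "children b \<inter> S = {}"
proof (rule ccontr)
  assume "children b \<inter> S \<noteq> {}"
  then obtain c where "c \<in> children b \<inter> S" by blast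
  then have "is_fort V E (S - insert b (subtrees (children b - S)))"
    using fort_Diff_branch min assms(2-4) unfolding is_minimal_fort_def by blast
  moreover have "S - insert b (subtrees (children b - S)) \<subset> S" using \<open>b \<in> S\<close> by blast
  ultimately show False using min unfolding is_minimal_fort_def by blast
qed

definition fort_vertex_condition :: "'a set \<Rightarrow> 'a \<Rightarrow> bool" where
  "fort_vertex_condition S b \<longleftrightarrow>
     (b \<in> S \<longrightarrow> card (nbrs E b \<inter> S) \<le> 1) \<and>
     (b \<notin> S \<longrightarrow> card (children b \<inter> S) = of_bool (parent b \<in> S))"

lemma fort_edge_condition_parent_iff:
  assumes "b \<in> V" "b \<noteq> root"
  shows "fort_edge_condition E S (parent b) b \<longleftrightarrow> fort_vertex_condition S b"
proof -
  have "finite (children b \<inter> S)" using finite_children by blast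
  moreover have "nbrs E b \<inter> S - {parent b} = children b \<inter> S"
    using nbrs_eq_insert_parent[OF assms] parent_notin_children[OF assms] by auto
  moreover have "nbrs E b \<inter> S = {} \<longleftrightarrow> children b \<inter> S = {} \<and> parent b \<notin> S"
    using nbrs_eq_insert_parent[OF assms] by auto
  ultimately show ?thesis
    using card_nbrs_Int[OF assms, of S]
    unfolding fort_edge_condition_def fort_vertex_condition_def by auto
qed

lemma minimal_fort_vertex_condition:
  assumes min: "is_minimal_fort V E S" and "root \<in> S" "b \<in> V" "b \<noteq> root"
  shows "fort_vertex_condition S b"
proof -
  have fort: "is_fort V E S" using min unfolding is_minimal_fort_def by blast
  have "card (children b \<inter> S) \<le> 1"
    using minimal_fort_card_children[OF min assms(2,3)] .
  moreover have "parent b \<in> S \<Longrightarrow> b \<in> S \<Longrightarrow> card (children b \<inter> S) = 0"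
    using minimal_fort_no_children[OF min assms(3,4)] by simp
  moreover have "b \<notin> S \<Longrightarrow> card (children b \<inter> S) + of_bool (parent b \<in> S) \<noteq> 1"
    using fort_card_nbrs_outside[OF fort \<open>b \<in> V\<close>] card_nbrs_Int[OF assms(3,4)] by simp
  ultimately show ?thesis
    using card_nbrs_Int[OF assms(3,4)] unfolding fort_vertex_condition_def by auto
qed

context
  fixes S assumes S_V: "S \<subseteq> V" and root_S: "root \<in> S"
    and cond: "\<And>b. b \<in> V \<Longrightarrow> b \<noteq> root \<Longrightarrow> fort_vertex_condition S b"
begin

lemma vertex_conditions_fort: "is_fort V E S"
  unfolding is_fort_def
proof (intro conjI ballI)
  show "S \<noteq> {}" "S \<subseteq> V" using S_V root_S by auto
  fix v assume v: "v \<in> V - S"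
  then have "v \<noteq> root" using root_S by blast
  then have "card (nbrs E v \<inter> S) = 2 * of_bool (parent v \<in> S)"
    using cond[of v] v card_nbrs_Int[of v S] unfolding fort_vertex_condition_def by auto
  then show "card (nbrs E v \<inter> S) \<noteq> 1" by (cases "parent v \<in> S") auto
qed

text \<open>The witness q is the parent of s or, when that lies outside S, the grandparent.\<close>
lemma subfort_mem_iff_ancestor:
  assumes "is_leaf E root" and F: "is_fort V E F" "F \<subseteq> S" and "s \<in> S" "s \<noteq> root"
  shows "\<exists>q\<in>S. depth q < depth s \<and> (q \<in> F \<longleftrightarrow> s \<in> F)"
proof -
  have sparse: "card (nbrs E x \<inter> S) \<le> 1" if "x \<in> S" for x
  proof (cases "x = root")
    case True
    have "card (nbrs E x \<inter> S) \<le> card (nbrs E x)" by (rule card_mono[OF finite_nbrs]) blast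
    then show ?thesis using \<open>is_leaf E root\<close> True unfolding is_leaf_def by simp
  next
    case False
    then show ?thesis using cond[of x] that S_V unfolding fort_vertex_condition_def by blast
  qed
  have "s \<in> V" using \<open>s \<in> S\<close> S_V by blast
  define a where "a = parent s"
  have "a \<in> V" "depth a < depth s" "s \<in> children a"
    using parent_in_V depth_parent_less \<open>s \<in> V\<close> \<open>s \<noteq> root\<close>
    unfolding a_def children_def by auto
  have "a \<in> nbrs E s" "s \<in> nbrs E a"
    using parent_edge[OF \<open>s \<in> V\<close> \<open>s \<noteq> root\<close>] edge_sym unfolding a_def nbrs_def by auto
  show ?thesis
  proof (cases "a \<in> S")
    case True
    have "s \<in> F \<longleftrightarrow> a \<in> F"
      using fort_mem_if_sole_nbr[OF F _ finite_nbrs sparse] \<open>a \<in> nbrs E s\<close> \<open>s \<in> nbrs E a\<close>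
        True \<open>s \<in> S\<close> \<open>a \<in> V\<close> \<open>s \<in> V\<close> by blast
    then show ?thesis using True \<open>depth a < depth s\<close> by blast
  next
    case False
    then have "a \<noteq> root" using root_S by blast
    have "children a \<inter> S \<noteq> {}" using \<open>s \<in> children a\<close> \<open>s \<in> S\<close> by blast
    then have "card (children a \<inter> S) \<noteq> 0" using finite_children by simp
    then have "parent a \<in> S" and "card (children a \<inter> S) = 1"
      using cond[OF \<open>a \<in> V\<close> \<open>a \<noteq> root\<close>] False unfolding fort_vertex_condition_def by auto
    then have "children a \<inter> S = {s}"
      using \<open>s \<in> children a\<close> \<open>s \<in> S\<close> by (metis IntI card_1_singletonE singletonD)
    then have "nbrs E a \<inter> F = {parent a, s} \<inter> F"
      using nbrs_eq_insert_parent[OF \<open>a \<in> V\<close> \<open>a \<noteq> root\<close>] F(2) by blast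
    moreover have "a \<notin> F" using False F(2) by blast
    moreover have "depth (parent a) < depth a"
      using depth_parent_less[OF \<open>a \<in> V\<close> \<open>a \<noteq> root\<close>] .
    ultimately have "parent a \<in> F \<longleftrightarrow> s \<in> F"
      using fort_card_nbrs_outside[OF F(1) \<open>a \<in> V\<close>] \<open>depth a < depth s\<close>
      by (cases "parent a \<in> F"; cases "s \<in> F") auto
    then show ?thesis
      using \<open>parent a \<in> S\<close> less_trans[OF \<open>depth (parent a) < depth a\<close> \<open>depth a < depth s\<close>]
      by blast
  qed
qed

lemma vertex_conditions_minimal_fort:
  assumes "is_leaf E root"
  shows "is_minimal_fort V E S"
proof -
  have "\<not> is_fort V E F" if "F \<subset> S" for F
  proof
    assume F: "is_fort V E F"
    have "s \<in> F \<longleftrightarrow> root \<in> F" if "s \<in> S" for s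
      using that
    proof (induction "depth s" arbitrary: s rule: less_induct)
      case less
      show ?case
      proof (cases "s = root")
        case False
        then obtain q where "q \<in> S" "depth q < depth s" "q \<in> F \<longleftrightarrow> s \<in> F"
          using subfort_mem_iff_ancestor[OF assms F] \<open>F \<subset> S\<close> less.prems by blast
        then show ?thesis using less.hyps by blast
      qed simp
    qed
    moreover obtain x where "x \<in> F" using F unfolding is_fort_def by blast
    ultimately have "S \<subseteq> F" using \<open>F \<subset> S\<close> by blast
    then show False using \<open>F \<subset> S\<close> by blast
  qed
  then show ?thesis using vertex_conditions_fort unfolding is_minimal_fort_def by blast
qed

end

lemma minimal_fort_iff_fort_edge_conditions:
  assumes "S \<subseteq> V" "root \<in> S" "is_leaf E root"
  shows "is_minimal_fort V E S \<longleftrightarrow>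
    (\<forall>a b. E a b \<and> depth a < depth b \<longrightarrow> fort_edge_condition E S a b)"
proof -
  have "(\<forall>a b. E a b \<and> depth a < depth b \<longrightarrow> fort_edge_condition E S a b) \<longleftrightarrow>
      (\<forall>b\<in>V - {root}. fort_edge_condition E S (parent b) b)"
    unfolding edge_depth_less_iff by blast
  also have "\<dots> \<longleftrightarrow> (\<forall>b\<in>V - {root}. fort_vertex_condition S b)"
    using fort_edge_condition_parent_iff by simp
  finally show ?thesis
    using minimal_fort_vertex_condition vertex_conditions_minimal_fort assms by blast
qed

end

lemma is_walk_take:
  assumes "is_walk V E xs" "0 < k"
  shows "is_walk V E (take k xs)"
  unfolding is_walk_def
proof (intro conjI allI impI)
  show "take k xs \<noteq> []" "set (take k xs) \<subseteq> V"
    using assms set_take_subset[of k xs] unfolding is_walk_def by auto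
  fix i assume "Suc i < length (take k xs)"
  then show "E (take k xs ! i) (take k xs ! Suc i)"
    using assms(1) unfolding is_walk_def by simp
qed

lemma gdist_walk:
  assumes "graph_connected V E" "u \<in> V" "v \<in> V"
  obtains xs where "is_walk V E xs" "hd xs = u" "last xs = v" "length xs = Suc (gdist V E u v)"
proof -
  obtain xs where xs: "is_walk V E xs" "hd xs = u" "last xs = v"
    using assms unfolding graph_connected_def by blast
  then have "length xs = Suc (length xs - 1)" unfolding is_walk_def by simp
  then have "\<exists>n xs. is_walk V E xs \<and> hd xs = u \<and> last xs = v \<and> length xs = Suc n"
    using xs by blast
  from LeastI_ex[OF this] show ?thesis using that unfolding gdist_def by blast
qed

lemma gdist_le:
  assumes "is_walk V E xs" "hd xs = u" "last xs = v" "length xs = Suc n"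
  shows "gdist V E u v \<le> n"
  unfolding gdist_def by (rule Least_le) (use assms in blast)

lemma gdist_closer_nbr:
  assumes "graph_connected V E" "l \<in> V" "v \<in> V" "v \<noteq> l"
  shows "\<exists>u. E u v \<and> gdist V E l u < gdist V E l v"
proof -
  obtain xs where xs: "is_walk V E xs" "hd xs = l" "last xs = v"
    "length xs = Suc (gdist V E l v)"
    using gdist_walk[OF assms(1-3)] .
  obtain m where m: "gdist V E l v = Suc m"
  proof (cases "gdist V E l v")
    case 0
    then obtain x where "xs = [x]" using xs(4) by (cases xs) auto
    then show ?thesis using xs(2,3) assms(4) by simp
  qed
  have "E (xs ! m) (xs ! Suc m)"
    using xs(1,4) m unfolding is_walk_def by simp
  moreover have "xs ! Suc m = v"
    using xs(3,4) m last_conv_nth[of xs] by fastforce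
  moreover have "gdist V E l (xs ! m) \<le> m"
  proof (rule gdist_le)
    show "is_walk V E (take (Suc m) xs)" using is_walk_take[OF xs(1)] by simp
    show "hd (take (Suc m) xs) = l" using xs(2) by simp
    show "last (take (Suc m) xs) = xs ! m" using xs(4) m by (simp add: take_Suc_conv_app_nth)
    show "length (take (Suc m) xs) = Suc m" using xs(4) m by simp
  qed
  ultimately show ?thesis using m by (metis le_imp_less_Suc)
qed

definition tree_parent :: "'a set \<Rightarrow> ('a \<Rightarrow> 'a \<Rightarrow> bool) \<Rightarrow> 'a \<Rightarrow> 'a \<Rightarrow> 'a" where
  "tree_parent V E r v = (SOME u. E v u \<and> gdist V E r u < gdist V E r v)"

lemma tree_parent_edge_closer:
  assumes "is_tree V E" "r \<in> V" "v \<in> V" "v \<noteq> r"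
  shows "E v (tree_parent V E r v) \<and> gdist V E r (tree_parent V E r v) < gdist V E r v"
  unfolding tree_parent_def
proof (rule someI_ex)
  show "\<exists>u. E v u \<and> gdist V E r u < gdist V E r v"
    using gdist_closer_nbr[of V E r v] assms unfolding is_tree_def by blast
qed

text \<open>The edges from the vertices other than r to their parents are distinct, and a tree
  has no further edges since it has exactly card V - 1 of them.\<close>
lemma tree_edge_to_parent:
  assumes T: "is_tree V E" and "r \<in> V" "E u v"
  shows "(u \<noteq> r \<and> v = tree_parent V E r u) \<or> (v \<noteq> r \<and> u = tree_parent V E r v)"
proof -
  let ?P = "tree_parent V E r" and ?d = "gdist V E r"
  have P: "E w (?P w)" "?d (?P w) < ?d w" if "w \<in> V - {r}" for w
    using tree_parent_edge_closer[OF T \<open>r \<in> V\<close>] that by auto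
  let ?up = "\<lambda>w. {w, ?P w}"
  have "inj_on ?up (V - {r})"
  proof (rule inj_onI)
    fix v w assume v: "v \<in> V - {r}" and w: "w \<in> V - {r}" and "?up v = ?up w"
    then have "v = w \<or> (v = ?P w \<and> w = ?P v)" by (auto simp: doubleton_eq_iff)
    then show "v = w" using P(2)[OF v] P(2)[OF w] by auto
  qed
  have "finite V" "card (edge_set E) = card V - 1"
    using T unfolding is_tree_def by auto
  have "card (?up ` (V - {r})) = card (V - {r})" using card_image[OF \<open>inj_on ?up _\<close>] .
  also have "\<dots> = card (edge_set E)"
    using \<open>r \<in> V\<close> \<open>finite V\<close> \<open>card (edge_set E) = card V - 1\<close> by simp
  finally have "card (?up ` (V - {r})) = card (edge_set E)" .
  moreover have "?up ` (V - {r}) \<subseteq> edge_set E"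
    using P unfolding edge_set_def by blast
  moreover have "finite (edge_set E)"
  proof (rule finite_subset)
    show "edge_set E \<subseteq> Pow V" using T unfolding edge_set_def is_tree_def by blast
    show "finite (Pow V)" using \<open>finite V\<close> by simp
  qed
  ultimately have "?up ` (V - {r}) = edge_set E"
    using card_subset_eq by blast
  moreover have "{u, v} \<in> edge_set E" using \<open>E u v\<close> unfolding edge_set_def by blast
  ultimately obtain w where "w \<in> V - {r}" "{u, v} = {w, ?P w}" by blast
  then show ?thesis by (auto simp: doubleton_eq_iff)
qed

lemma tree_rooted_tree:
  assumes T: "is_tree V E" and "r \<in> V"
  shows "rooted_tree V E r (tree_parent V E r) (gdist V E r)"
proof
  show "finite V" using T unfolding is_tree_def by blast
  show "E u v \<Longrightarrow> u \<in> V \<and> v \<in> V" "E u v \<Longrightarrow> E v u" for u v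
    using T unfolding is_tree_def by blast+
  show "E v (tree_parent V E r v)" "gdist V E r (tree_parent V E r v) < gdist V E r v"
    if "v \<in> V" "v \<noteq> r" for v
    using tree_parent_edge_closer[OF T \<open>r \<in> V\<close> that] by blast+
  show "(u \<noteq> r \<and> v = tree_parent V E r u) \<or> (v \<noteq> r \<and> u = tree_parent V E r v)"
    if "E u v" for u v
    using tree_edge_to_parent[OF T \<open>r \<in> V\<close> that] .
qed

lemma tree_fort_contains_leaf:
  assumes "is_tree V E" "2 \<le> card V" "is_fort V E S"
  shows "\<exists>l\<in>S. is_leaf E l"
proof -
  obtain r where "r \<in> S" using assms(3) unfolding is_fort_def by blast
  then have "r \<in> V" using assms(3) unfolding is_fort_def by blast
  have "\<not> V \<subseteq> {r}"
  proof
    assume "V \<subseteq> {r}"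
    then have "card V \<le> card {r}" by (intro card_mono) auto
    then show False using assms(2) by simp
  qed
  then obtain v where "v \<in> V" "v \<noteq> r" by blast
  then show ?thesis
    using rooted_tree.fort_contains_leaf[OF tree_rooted_tree[OF assms(1) \<open>r \<in> V\<close>] assms(3)]
    by blast
qed

lemma tree_minimal_fort_iff_fort_edge_conditions:
  assumes "is_tree V E" "S \<subseteq> V" "l \<in> S" "is_leaf E l"
  shows "is_minimal_fort V E S \<longleftrightarrow>
    (\<forall>a b. E a b \<and> gdist V E l a < gdist V E l b \<longrightarrow> fort_edge_condition E S a b)"
proof -
  have "l \<in> V" using assms(2,3) by blast
  then show ?thesis
    by (rule rooted_tree.minimal_fort_iff_fort_edge_conditions[OF tree_rooted_tree[OF assms(1)]
          assms(2-4)])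
qed

theorem mainTheorem8:
  fixes V :: "'a set" and E :: "'a \<Rightarrow> 'a \<Rightarrow> bool" and S :: "'a set"
  assumes "is_tree V E" and "card V \<ge> 3" and "S \<subseteq> V"
  shows "is_minimal_fort V E S \<longleftrightarrow>
    ((\<exists>l\<in>S. is_leaf E l) \<and>
     (\<forall>l\<in>S. is_leaf E l \<longrightarrow>
        (\<forall>a b. E a b \<and> gdist V E l a < gdist V E l b \<longrightarrow>
           (a \<notin> S \<and> b \<notin> S \<longrightarrow> nbrs E b \<inter> S = {}) \<and>
           (a \<notin> S \<and> b \<in> S \<longrightarrow> card (nbrs E b \<inter> S) \<le> 1) \<and>
           (a \<in> S \<and> b \<notin> S \<longrightarrow> card ((nbrs E b \<inter> S) - {a}) = 1) \<and>
           (a \<in> S \<and> b \<in> S \<longrightarrow> card ((nbrs E b \<inter> S) - {a}) = 0))))"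
proof -
  have leaf: "\<exists>l\<in>S. is_leaf E l" if "is_minimal_fort V E S"
    using that assms(2)
    by (intro tree_fort_contains_leaf[OF assms(1)]) (auto simp: is_minimal_fort_def)
  note min_iff = tree_minimal_fort_iff_fort_edge_conditions[OF assms(1,3)]
  show ?thesis
    unfolding fort_edge_condition_def[symmetric]
  proof (intro iffI conjI ballI impI)
    show "\<exists>l\<in>S. is_leaf E l" if "is_minimal_fort V E S" using leaf that .
  next
    show "\<forall>a b. E a b \<and> gdist V E l a < gdist V E l b \<longrightarrow> fort_edge_condition E S a b"
      if "is_minimal_fort V E S" "l \<in> S" "is_leaf E l" for l
      using min_iff that by blast
  next
    assume rhs: "(\<exists>l\<in>S. is_leaf E l) \<and> (\<forall>l\<in>S. is_leaf E l \<longrightarrow>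
      (\<forall>a b. E a b \<and> gdist V E l a < gdist V E l b \<longrightarrow> fort_edge_condition E S a b))"
    then obtain l where "l \<in> S" "is_leaf E l" by blast
    then show "is_minimal_fort V E S" using rhs min_iff by blast
  qed
qed

end
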